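(* Let $\mathcal F=\{f_1,\dots,f_M\}$ be a frame for $\mathbb C^N$ with range of coefficients $W\subset\mathbb C^M$, and suppose $\mathbb M^{\mathcal F}$ is injective. Then for every $S\subset\{1,\dots,M\}$, if $L^S\cap W\neq\{0\}$ then $L^{S^\complement}\cap W=\{0\}$. Consequently, for every such $S$, either $\{f_j\}_{j\in S}$ or $\{f_j\}_{j\in S^\complement}$ spans $\mathbb C^N$.
   Context: A frame for $\mathbb C^N$ is a spanning family $\{f_1,\dots,f_M\}$; $W=\{(\langle x,f_k\rangle)_{k=1}^M : x\in\mathbb C^N\}$ with $\langle x,y\rangle=\sum_k x_k\overline{y_k}$. For $S\subset\{1,\dots,M\}$, $L^S=\{a\in\mathbb C^M: a_i=0\ \forall i\in S\}$ and $S^\complement$ is the complement. $\mathbb M^{\mathcal F}$ is injective means $|\langle x,f_k\rangle|=|\langle y,f_k\rangle|$ for all $k$ implies $y=cx$ for some $c\in\mathbb C$, $|c|=1$. *)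

theory Defs
  imports "HOL-Analysis.Analysis"
begin

text \<open>Vectors of C^N are modelled as complex^'n, coefficient vectors in C^M as complex^'m
  (the frame index set {1..M} is the finite type 'm).\<close>

definition cinner :: "complex^'n \<Rightarrow> complex^'n \<Rightarrow> complex" where
  "cinner x y = (\<Sum>k\<in>UNIV. x $ k * cnj (y $ k))"

definition spans_on :: "'m set \<Rightarrow> ('m \<Rightarrow> complex^'n) \<Rightarrow> bool" where
  "spans_on J f \<longleftrightarrow> (\<forall>x::complex^'n. \<exists>c::'m \<Rightarrow> complex. x = (\<Sum>j\<in>J. c j *s f j))"

definition is_frame :: "('m::finite \<Rightarrow> complex^'n) \<Rightarrow> bool" where
  "is_frame f \<longleftrightarrow> spans_on UNIV f"

definition coeff_range :: "('m::finite \<Rightarrow> complex^'n) \<Rightarrow> (complex^'m) set" where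
  "coeff_range f = {(\<chi> k. cinner x (f k)) | x. True}"

definition Lsub :: "'m set \<Rightarrow> (complex^'m) set" where
  "Lsub S = {a. \<forall>i\<in>S. a $ i = 0}"

definition phase_retrieval_injective :: "('m::finite \<Rightarrow> complex^'n) \<Rightarrow> bool" where
  "phase_retrieval_injective f \<longleftrightarrow>
     (\<forall>x y. (\<forall>k. cmod (cinner x (f k)) = cmod (cinner y (f k)))
        \<longrightarrow> (\<exists>c. cmod c = 1 \<and> y = c *s x))"

end

theory Submission
  imports Defs
begin

text \<open>If the coefficient sequence of x vanishes on S and that of y on the complement, then
  x + y and x - y have coefficients of equal modulus. Injectivity gives x - y = c (x + y)
  with c unimodular; a nonzero coefficient of x forces c = 1 and a nonzero coefficient of y
  forces c = -1, so one of the two sequences is zero. The spanning alternative follows because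
  a subfamily that does not span has a nonzero vector orthogonal to it, whose coefficient
  sequence (nonzero, since the whole family is a frame) lies in the corresponding L^S.\<close>

lemma cinner_add_left: "cinner (x + y) z = cinner x z + cinner y z"
  unfolding cinner_def by (simp add: distrib_right sum.distrib)

lemma cinner_diff_left: "cinner (x - y) z = cinner x z - cinner y z"
  unfolding cinner_def by (simp add: left_diff_distrib sum_subtractf)

lemma cinner_scale_left: "cinner (c *s x) z = c * cinner x z"
  unfolding cinner_def by (simp add: sum_distrib_left mult.assoc)

lemma cinner_sum_right:
  "cinner x (\<Sum>j\<in>J. c j *s g j) = (\<Sum>j\<in>J. cnj (c j) * cinner x (g j))"
  unfolding cinner_def
  by (simp add: sum_distrib_left) (subst sum.swap, simp add: algebra_simps)

lemma cinner_self: "cinner x x = complex_of_real ((norm x)\<^sup>2)"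
  unfolding cinner_def norm_vec_def L2_set_def
  by (simp add: sum_nonneg complex_norm_square del: of_real_power)

lemma cinner_self_eq_0_iff [simp]: "cinner x x = 0 \<longleftrightarrow> x = 0"
  by (simp add: cinner_self)

lemma Lsub_inter_coeff_range_nontrivial_iff:
  fixes f :: "'m::finite \<Rightarrow> complex^'n"
  shows "Lsub S \<inter> coeff_range f \<noteq> {0} \<longleftrightarrow>
     (\<exists>x. (\<forall>k\<in>S. cinner x (f k) = 0) \<and> (\<exists>k. cinner x (f k) \<noteq> 0))"
proof -
  have W: "Lsub S \<inter> coeff_range f = {(\<chi> k. cinner x (f k)) | x. \<forall>k\<in>S. cinner x (f k) = 0}"
    unfolding Lsub_def coeff_range_def by auto
  have "0 \<in> Lsub S \<inter> coeff_range f"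
    unfolding W by (auto intro: exI[of _ 0] simp: vec_eq_iff cinner_def)
  then have "Lsub S \<inter> coeff_range f \<noteq> {0} \<longleftrightarrow> (\<exists>a\<in>Lsub S \<inter> coeff_range f. a \<noteq> 0)"
    by blast
  moreover have "(\<chi> k. cinner x (f k)) \<noteq> 0 \<longleftrightarrow> (\<exists>k. cinner x (f k) \<noteq> 0)" for x
    by (simp add: vec_eq_iff)
  ultimately show ?thesis
    unfolding W by blast
qed

lemma phase_retrieval_injective_complementary_supports:
  assumes inj: "phase_retrieval_injective f"
    and x: "\<forall>k\<in>S. cinner x (f k) = 0"
    and y: "\<forall>k\<in>-S. cinner y (f k) = 0"
  shows "(\<forall>k. cinner x (f k) = 0) \<or> (\<forall>k. cinner y (f k) = 0)"
proof (rule ccontr)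
  assume "\<not> ?thesis"
  then obtain k0 k1 where k0: "cinner x (f k0) \<noteq> 0" and k1: "cinner y (f k1) \<noteq> 0"
    by blast
  have "cmod (cinner (x + y) (f k)) = cmod (cinner (x - y) (f k))" for k
    using x y by (cases "k \<in> S") (auto simp: cinner_add_left cinner_diff_left norm_minus_commute)
  then obtain c where "x - y = c *s (x + y)"
    using inj unfolding phase_retrieval_injective_def by blast
  then have c: "cinner x (f k) - cinner y (f k) = c * (cinner x (f k) + cinner y (f k))" for k
    by (metis cinner_add_left cinner_diff_left cinner_scale_left)
  have "k0 \<notin> S" "k1 \<in> S"
    using x y k0 k1 by auto
  then have "cinner x (f k0) = c * cinner x (f k0)" "- cinner y (f k1) = c * cinner y (f k1)"
    using c[of k0] c[of k1] x y by auto
  with k0 have "c = 1"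
    by simp
  with \<open>- cinner y (f k1) = c * cinner y (f k1)\<close> k1 show False
    by simp
qed

lemma frame_cinner_eq_0_imp_eq_0:
  assumes "is_frame f" and "\<forall>k. cinner x (f k) = 0"
  shows "x = 0"
proof -
  obtain c where "x = (\<Sum>j\<in>UNIV. c j *s f j)"
    using assms(1) unfolding is_frame_def spans_on_def by blast
  then have "cinner x x = (\<Sum>j\<in>UNIV. cnj (c j) * cinner x (f j))"
    by (simp only: cinner_sum_right)
  with assms(2) show ?thesis
    by simp
qed

text \<open>A maps x to its coefficients on S and is injective, hence left invertible; so its
  transpose is onto, and the transpose applied to c is the entrywise conjugate of the
  combination of the f j with coefficients cnj c.\<close>

lemma spans_onI_orthogonal:
  fixes f :: "'m::finite \<Rightarrow> complex^'n"
  assumes orth: "\<And>x. \<forall>j\<in>S. cinner x (f j) = 0 \<Longrightarrow> x = 0"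
  shows "spans_on S f"
  unfolding spans_on_def
proof
  fix x :: "complex^'n"
  define A :: "complex^'n^'m" where "A = (\<chi> j k. if j \<in> S then cnj (f j $ k) else 0)"
  have "A *v z = (\<chi> j. if j \<in> S then cinner z (f j) else 0)" for z
    unfolding A_def cinner_def by (simp add: vec_eq_iff matrix_vector_mult_def mult.commute)
  then have "z = 0" if "A *v z = 0" for z
    using that orth[of z] by (auto simp: vec_eq_iff split: if_splits)
  then obtain B where "B ** A = mat 1"
    using matrix_left_invertible_ker by blast
  then have "transpose A ** transpose B = mat 1"
    by (metis matrix_transpose_mul transpose_mat)
  then obtain c where c: "(\<chi> k. cnj (x $ k)) = transpose A *v c"
    using matrix_right_invertible_surjective by (metis surjD)
  have "x $ k = (\<Sum>j\<in>S. cnj (c $ j) *s f j) $ k" for k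
  proof -
    have "cnj (x $ k) = (\<Sum>j\<in>UNIV. (if j \<in> S then cnj (f j $ k) else 0) * c $ j)"
      using c unfolding A_def by (simp add: vec_eq_iff matrix_vector_mult_def transpose_def)
    also have "\<dots> = (\<Sum>j\<in>S. cnj (f j $ k) * c $ j)"
      by (rule sum.mono_neutral_cong_right) auto
    finally have "cnj (cnj (x $ k)) = cnj (\<Sum>j\<in>S. cnj (f j $ k) * c $ j)"
      by simp
    then have "x $ k = (\<Sum>j\<in>S. f j $ k * cnj (c $ j))"
      by simp
    then show ?thesis
      by (simp add: mult.commute)
  qed
  then show "\<exists>c. x = (\<Sum>j\<in>S. c j *s f j)"
    by (auto simp: vec_eq_iff)
qed

lemma Lsub_complement_inter_coeff_range_trivial:
  fixes f :: "'m::finite \<Rightarrow> complex^'n"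
  assumes "phase_retrieval_injective f" and "Lsub S \<inter> coeff_range f \<noteq> {0}"
  shows "Lsub (- S) \<inter> coeff_range f = {0}"
proof (rule ccontr)
  assume "Lsub (- S) \<inter> coeff_range f \<noteq> {0}"
  with assms(2) obtain x y where
    x: "\<forall>k\<in>S. cinner x (f k) = 0" "\<exists>k. cinner x (f k) \<noteq> 0" and
    y: "\<forall>k\<in>-S. cinner y (f k) = 0" "\<exists>k. cinner y (f k) \<noteq> 0"
    unfolding Lsub_inter_coeff_range_nontrivial_iff by blast
  then show False
    using phase_retrieval_injective_complementary_supports[OF assms(1) x(1) y(1)] by blast
qed

lemma Lsub_inter_coeff_range_nontrivial_if_not_spans_on:
  fixes f :: "'m::finite \<Rightarrow> complex^'n"
  assumes "is_frame f" and "\<not> spans_on S f"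
  shows "Lsub S \<inter> coeff_range f \<noteq> {0}"
proof -
  obtain x where "x \<noteq> 0" "\<forall>j\<in>S. cinner x (f j) = 0"
    using spans_onI_orthogonal assms(2) by blast
  with frame_cinner_eq_0_imp_eq_0[OF assms(1)] show ?thesis
    unfolding Lsub_inter_coeff_range_nontrivial_iff by blast
qed

theorem proposition3p5:
  fixes f :: "'m::finite \<Rightarrow> complex^'n"
  assumes "is_frame f"
    and "phase_retrieval_injective f"
  shows "\<forall>S::'m set. (Lsub S \<inter> coeff_range f \<noteq> {0} \<longrightarrow> Lsub (- S) \<inter> coeff_range f = {0})
              \<and> (spans_on S f \<or> spans_on (- S) f)"
proof
  fix S :: "'m set"
  have trivial: "Lsub S \<inter> coeff_range f \<noteq> {0} \<Longrightarrow> Lsub (- S) \<inter> coeff_range f = {0}"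
    using Lsub_complement_inter_coeff_range_trivial[OF assms(2)] .
  moreover have "spans_on S f \<or> spans_on (- S) f"
    using trivial Lsub_inter_coeff_range_nontrivial_if_not_spans_on[OF assms(1)] by blast
  ultimately show "(Lsub S \<inter> coeff_range f \<noteq> {0} \<longrightarrow> Lsub (- S) \<inter> coeff_range f = {0})
      \<and> (spans_on S f \<or> spans_on (- S) f)"
    by blast
qed

end
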